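(* Let $p$ be an odd prime. Then $$\sum_{t=0}^{(p-1)/2}(-1)^t\left[\binom{\frac{p-1}{2}+t}{t}-\binom{p+\frac{p-1}{2}+t}{p+t}\right]\binom{-\frac12}{t}^2\equiv0\pmod{p^2}.$$
   Context: For a rational number $x$ and integer $t\ge0$, $\binom{x}{t}=\frac{x(x-1)\cdots(x-t+1)}{t!}$; in particular $\binom{-1/2}{t}$ is a rational number whose denominator is a power of $2$. For rationals $a,b$ whose denominators are prime to $p$, $a\equiv b\pmod{p^k}$ means that $(a-b)/p^k$ is a rational number with denominator prime to $p$. *)

theory Defs
  imports Complex_Main "HOL-Computational_Algebra.Primes"
begin

definition rat_cong_pow :: "rat \<Rightarrow> rat \<Rightarrow> nat \<Rightarrow> nat \<Rightarrow> bool" where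
  "rat_cong_pow a b p k \<longleftrightarrow>
     coprime (snd (quotient_of ((a - b) / of_nat (p ^ k)))) (int p)"

end

theory Submission
  imports Defs "HOL-Number_Theory.Number_Theory"
begin

text \<open>Let n = (p-1)/2. As (-1/2 gchoose t)^2 = (2t choose t)^2 / 16^t, the sum is an integer
divided by 16^n, namely the sum of (-1)^t (A t - B t) 16^(n-t) (2t choose t)^2 with
A t = (t+n choose n) and B t = (t+p+n choose n). The numbers n! A t, n! B t and (-1)^n n! D t,
where D t = (2n-t choose n), are the values of the integer polynomial x (x+1) ... (x+n-1) at
x = t+1, t+1+p and t+1-p. Its first differences with step p are divisible by p and its second
difference by p^2; as n! is prime to p, A t \<equiv> B t (mod p) and
A t - B t \<equiv> (-1)^n D t - A t (mod p^2). Together with 4^t (n choose t) \<equiv> (-1)^t (2t choose t) (mod p),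
the integer is congruent modulo p^2 to 16^n times the sum of (-1)^t ((-1)^n D t - A t) (n choose t)^2,
which vanishes because the reflection t \<mapsto> n - t exchanges A and D.\<close>

lemma gbinomial_minus_one_half:
  "((-1/2 :: 'a :: field_char_0) gchoose t) = (-1)^t * of_nat (2 * t choose t) / 4^t"
proof -
  have "fact (2 * t) = (4^t * pochhammer (1/2) t * fact t :: 'a)"
    using fact_double[of t] by (simp add: power_mult)
  moreover have "of_nat (2 * t choose t) * (fact t * fact t) = (fact (2 * t) :: 'a)"
    using binomial_fact[of t "2 * t", where 'a = 'a] by (simp add: mult_2)
  ultimately have "pochhammer (1/2 :: 'a) t = of_nat (2 * t choose t) * fact t / 4^t"
    by (simp add: field_simps)
  then show ?thesis
    by (simp add: gbinomial_pochhammer)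
qed

lemma gbinomial_minus_one_half_square:
  "((-1/2 :: 'a :: field_char_0) gchoose t)^2 = of_nat (2 * t choose t)^2 / 16^t"
proof -
  have "(4^t)^2 = (16 :: 'a)^t"
    by (simp add: power2_eq_square flip: power_mult_distrib)
  then show ?thesis
    unfolding gbinomial_minus_one_half by (simp add: power_divide power_mult_distrib flip: power_mult)
qed

lemma central_binomial_Suc: "Suc t * (2 * Suc t choose Suc t) = 2 * (2 * t + 1) * (2 * t choose t)"
proof -
  have "Suc t * (2 * Suc t choose Suc t) = 2 * Suc t * (2 * t + 1 choose t)"
    using Suc_times_binomial[of t "2 * t + 1"] by simp
  also have "\<dots> = 2 * (Suc t * (2 * t + 1 choose t))"
    by simp
  also have "Suc t * (2 * t + 1 choose t) = (2 * t + 1) * (2 * t choose t)"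
    using binomial_absorb_comp[of "2 * t + 1" t] by (simp add: Suc_diff_le)
  finally show ?thesis by simp
qed

lemma pochhammer_shift_dvd:
  fixes a q :: "'a :: comm_ring_1"
  shows "q dvd pochhammer (a + q) n - pochhammer a n"
proof (induction n)
  case (Suc n)
  have "pochhammer (a + q) (Suc n) - pochhammer a (Suc n)
      = (a + of_nat n) * (pochhammer (a + q) n - pochhammer a n) + q * pochhammer (a + q) n"
    by (simp add: pochhammer_rec' algebra_simps)
  with Suc show ?case by simp
qed simp

lemma pochhammer_second_difference_dvd:
  fixes a q :: "'a :: comm_ring_1"
  shows "q^2 dvd pochhammer (a + q) n + pochhammer (a - q) n - 2 * pochhammer a n"
proof (induction n)
  case (Suc n)
  define X Y Z where "X = pochhammer (a + q) n" and "Y = pochhammer (a - q) n" and "Z = pochhammer a n"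
  have "q dvd X - Z" and "q dvd Z - Y"
    unfolding X_def Y_def Z_def using pochhammer_shift_dvd[of q a n] pochhammer_shift_dvd[of q "a - q" n]
    by simp_all
  then have "q^2 dvd q * (X - Y)"
    using dvd_add[of q "X - Z" "Z - Y"] by (simp add: power2_eq_square mult_dvd_mono)
  moreover have "pochhammer (a + q) (Suc n) + pochhammer (a - q) (Suc n) - 2 * pochhammer a (Suc n)
      = (a + of_nat n) * (X + Y - 2 * Z) + q * (X - Y)"
    unfolding X_def Y_def Z_def by (simp add: pochhammer_rec' algebra_simps)
  ultimately show ?case
    using Suc unfolding X_def Y_def Z_def by simp
qed simp

lemma pochhammer_int_Suc_eq_binomial: "pochhammer (int m + 1) n = fact n * int ((m + n) choose n)"
proof -
  have "rat_of_int (pochhammer (int m + 1) n) = fact n * (of_nat (m + n) gchoose n)"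
    by (simp add: gbinomial_pochhammer' flip: pochhammer_of_int)
  then have "rat_of_int (pochhammer (int m + 1) n) = rat_of_int (fact n * int ((m + n) choose n))"
    using binomial_gbinomial[of "m + n" n, where 'a = rat] by simp
  then show ?thesis
    by (simp only: of_int_eq_iff)
qed

lemma pochhammer_minus_int_eq_binomial: "pochhammer (- int m) n = (-1)^n * fact n * int (m choose n)"
proof -
  have "rat_of_int (pochhammer (- int m) n) = (-1)^n * fact n * (of_nat m gchoose n)"
    by (simp add: gbinomial_pochhammer flip: pochhammer_of_int)
  then have "rat_of_int (pochhammer (- int m) n) = rat_of_int ((-1)^n * fact n * int (m choose n))"
    by (simp flip: binomial_gbinomial)
  then show ?thesis
    by (simp only: of_int_eq_iff)
qed

lemma coprime_fact_prime:
  assumes "prime p" "n < p"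
  shows "coprime (fact n :: int) (int p)"
proof -
  have "\<not> p dvd fact n"
    using assms by (simp add: prime_dvd_fact_iff)
  then have "coprime (fact n) p"
    using assms(1) by (simp add: prime_imp_coprime coprime_commute)
  then show ?thesis
    by (metis coprime_int_iff of_nat_fact)
qed

lemma pochhammer_int_Suc_add:
  "pochhammer (int m + 1 + int p) n = fact n * int ((m + p + n) choose n)"
  using pochhammer_int_Suc_eq_binomial[of "m + p" n] by (simp add: algebra_simps)

lemma pochhammer_int_Suc_diff:
  assumes "m < p"
  shows "pochhammer (int m + 1 - int p) n = (-1)^n * fact n * int ((p - 1 - m) choose n)"
proof -
  have "int m + 1 - int p = - int (p - 1 - m)"
    using assms by simp
  then show ?thesis
    by (simp only: pochhammer_minus_int_eq_binomial)
qed

lemma binomial_add_prime_cong: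
  assumes "prime p" "n < p"
  shows "[int ((m + p + n) choose n) = int ((m + n) choose n)] (mod int p)"
proof -
  have "int p dvd pochhammer (int m + 1 + int p) n - pochhammer (int m + 1) n"
    by (rule pochhammer_shift_dvd)
  then have "[fact n * int ((m + p + n) choose n) = fact n * int ((m + n) choose n)] (mod int p)"
    by (simp only: pochhammer_int_Suc_add pochhammer_int_Suc_eq_binomial cong_iff_dvd_diff)
  then show ?thesis
    using coprime_fact_prime[OF assms] cong_mult_lcancel by blast
qed

lemma binomial_second_difference_prime_dvd:
  assumes "prime p" "n < p" "m < p"
  shows "int p ^ 2 dvd int ((m + p + n) choose n) + (-1)^n * int ((p - 1 - m) choose n)
                       - 2 * int ((m + n) choose n)"
    (is "_ dvd ?B + (-1)^n * ?D - 2 * ?A")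
proof -
  have "int p ^ 2 dvd fact n * ?B + (-1)^n * fact n * ?D - 2 * (fact n * ?A)"
    using pochhammer_second_difference_dvd[of "int p" "int m + 1" n]
    by (simp only: pochhammer_int_Suc_add pochhammer_int_Suc_diff[OF assms(3)]
        pochhammer_int_Suc_eq_binomial)
  then have "int p ^ 2 dvd fact n * (?B + (-1)^n * ?D - 2 * ?A)"
    by (simp add: algebra_simps)
  moreover have "coprime (int p ^ 2) (fact n)"
    using coprime_fact_prime[OF assms(1,2)] by (simp add: coprime_commute)
  ultimately show ?thesis
    by (simp add: coprime_dvd_mult_right_iff)
qed

lemma four_pow_binomial_half_cong:
  assumes p: "prime p" "p = 2 * n + 1" and "t \<le> n"
  shows "[4^t * int (n choose t) = (-1)^t * int (2 * t choose t)] (mod int p)"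
  using \<open>t \<le> n\<close>
proof (induction t)
  case (Suc t)
  have "Suc t * (n choose Suc t) = (n - t) * (n choose t)"
    using binomial_absorption[of t n] binomial_absorb_comp[of n t] by simp
  then have absorb: "int (Suc t) * int (n choose Suc t) = (int n - int t) * int (n choose t)"
    using Suc.prems by (metis of_nat_diff of_nat_mult Suc_leD)
  have "int (Suc t) * (4^Suc t * int (n choose Suc t)) = 4 * 4^t * (int (Suc t) * int (n choose Suc t))"
    by (simp only: power_Suc mult_ac)
  also have "\<dots> = 4 * (int n - int t) * (4^t * int (n choose t))"
    by (simp only: absorb mult_ac)
  also have "[\<dots> = 4 * (int n - int t) * ((-1)^t * int (2 * t choose t))] (mod int p)"
    using Suc by (intro cong_scalar_left) simp
  also have "4 * (int n - int t) * ((-1)^t * int (2 * t choose t))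
      = (-1)^Suc t * (2 * (2 * int t + 1) * int (2 * t choose t)) + int p * (2 * (-1)^t * int (2 * t choose t))"
    using p(2) by (simp add: algebra_simps)
  also have "[\<dots> = (-1)^Suc t * (2 * (2 * int t + 1) * int (2 * t choose t))] (mod int p)"
    by (simp add: cong_iff_dvd_diff)
  also have "2 * (2 * int t + 1) * int (2 * t choose t) = int (Suc t) * int (2 * Suc t choose Suc t)"
    using arg_cong[OF central_binomial_Suc[of t], of int]
    by (simp only: of_nat_mult of_nat_add of_nat_numeral of_nat_1)
  also have "(-1)^Suc t * (int (Suc t) * int (2 * Suc t choose Suc t))
      = int (Suc t) * ((-1)^Suc t * int (2 * Suc t choose Suc t))"
    by (simp only: mult_ac)
  finally have "[int (Suc t) * (4^Suc t * int (n choose Suc t))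
      = int (Suc t) * ((-1)^Suc t * int (2 * Suc t choose Suc t))] (mod int p)" .
  moreover have "coprime (int (Suc t)) (int p)"
    using coprime_fact_prime[OF p(1), of "Suc t"] Suc.prems p(2)
    by simp
  ultimately show ?case
    using cong_mult_lcancel by blast
qed simp

lemma sixteen_pow_binomial_half_sq_cong:
  assumes "prime p" "p = 2 * n + 1" "t \<le> n"
  shows "[16^n * int (n choose t)^2 = 16^(n - t) * int (2 * t choose t)^2] (mod int p)"
proof -
  have "(4^t)^2 = (16 :: int)^t"
    by (simp add: power2_eq_square flip: power_mult_distrib)
  then have "(16 :: int)^n = 16^(n - t) * (4^t)^2"
    using assms(3) by (simp flip: power_add)
  then have "16^n * int (n choose t)^2 = 16^(n - t) * (4^t * int (n choose t))^2"
    by (simp add: power_mult_distrib)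
  also have "[\<dots> = 16^(n - t) * ((-1)^t * int (2 * t choose t))^2] (mod int p)"
    by (intro cong_scalar_left cong_pow four_pow_binomial_half_cong[OF assms])
  also have "16^(n - t) * ((-1)^t * int (2 * t choose t))^2 = 16^(n - t) * int (2 * t choose t)^2"
    by (simp add: power_mult_distrib flip: power_mult)
  finally show ?thesis .
qed

lemma binomial_add_commute: "(a + b) choose a = (a + b) choose b"
  using binomial_symmetric[of a "a + b"] by simp

lemma alternating_binomial_sum_reflect:
  "(\<Sum>t=0..n. (-1)^t * int ((2 * n - t) choose n) * int (n choose t)^2)
     = (-1)^n * (\<Sum>t=0..n. (-1)^t * int ((t + n) choose n) * int (n choose t)^2)"
proof -
  have "(\<Sum>t=0..n. (-1)^t * int ((2 * n - t) choose n) * int (n choose t)^2)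
      = (\<Sum>t=0..n. (-1)^(n - t) * int ((2 * n - (n - t)) choose n) * int (n choose (n - t))^2)"
    by (subst sum.atLeastAtMost_rev) simp
  also have "\<dots> = (\<Sum>t=0..n. (-1)^n * ((-1)^t * int ((t + n) choose n) * int (n choose t)^2))"
  proof (rule sum.cong)
    fix t assume "t \<in> {0..n}"
    then have "t \<le> n" by simp
    then have "(-1 :: int)^n = (-1)^(n - t) * (-1)^t"
      by (simp flip: power_add)
    then have "(-1 :: int)^(n - t) = (-1)^n * (-1)^t"
      by (simp add: algebra_simps)
    with \<open>t \<le> n\<close> show "(-1)^(n - t) * int ((2 * n - (n - t)) choose n) * int (n choose (n - t))^2
        = (-1)^n * ((-1)^t * int ((t + n) choose n) * int (n choose t)^2)"
      by (simp add: binomial_symmetric[symmetric] mult_2 add.commute)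
  qed simp
  finally show ?thesis
    by (simp add: sum_distrib_left)
qed

lemma sum_binomial_weights_dvd_prime_square:
  assumes p: "prime p" "p = 2 * n + 1"
  shows "int p ^ 2 dvd (\<Sum>t=0..n. (-1)^t * (int ((t + n) choose n) - int ((t + p + n) choose n))
                                  * (16^(n - t) * int (2 * t choose t)^2))"
proof -
  define A B D c w where
    "A t = int ((t + n) choose n)" and "B t = int ((t + p + n) choose n)"
    and "D t = int ((2 * n - t) choose n)" and "c t = int (n choose t)"
    and "w t = 16^(n - t) * int (2 * t choose t)^2" for t
  define K :: int where "K = 16^n"
  define g where "g t = (-1)^t * ((-1)^n * D t - A t) * (K * c t^2)" for t
  have "(\<Sum>t=0..n. g t) = K * ((-1)^n * (\<Sum>t=0..n. (-1)^t * D t * c t^2)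
                                - (\<Sum>t=0..n. (-1)^t * A t * c t^2))"
    unfolding g_def by (simp add: sum_distrib_left sum_subtractf algebra_simps)
  then have sum_g: "(\<Sum>t=0..n. g t) = 0"
    unfolding A_def D_def c_def by (simp add: alternating_binomial_sum_reflect)
  have "int p ^ 2 dvd (-1)^t * (A t - B t) * w t - g t" if "t \<le> n" for t
  proof -
    have "n < p" "t < p" using p(2) \<open>t \<le> n\<close> by simp_all
    have "int p dvd A t - B t"
      using binomial_add_prime_cong[OF p(1) \<open>n < p\<close>, of t]
      unfolding A_def B_def by (simp add: cong_iff_dvd_diff dvd_diff_commute)
    moreover have "int p dvd w t - K * c t^2"
      using sixteen_pow_binomial_half_sq_cong[OF p \<open>t \<le> n\<close>]
      unfolding w_def K_def c_def by (simp add: cong_iff_dvd_diff dvd_diff_commute)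
    ultimately have "int p ^ 2 dvd (A t - B t) * (w t - K * c t^2)"
      by (simp add: power2_eq_square mult_dvd_mono)
    moreover have "int p ^ 2 dvd (B t + (-1)^n * D t - 2 * A t) * (K * c t^2)"
      using binomial_second_difference_prime_dvd[OF p(1) \<open>n < p\<close> \<open>t < p\<close>] p(2)
      unfolding A_def B_def D_def by simp
    moreover have "(-1)^t * (A t - B t) * w t - g t
        = (-1)^t * ((A t - B t) * (w t - K * c t^2) - (B t + (-1)^n * D t - 2 * A t) * (K * c t^2))"
      unfolding g_def by (simp add: algebra_simps)
    ultimately show ?thesis
      by simp
  qed
  then have "int p ^ 2 dvd (\<Sum>t=0..n. (-1)^t * (A t - B t) * w t - g t)"
    by (intro dvd_sum) simp
  then show ?thesis
    using sum_g by (simp add: sum_subtractf A_def B_def w_def mult.assoc)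
qed

lemma snd_quotient_of_dvd:
  assumes "d \<noteq> 0"
  shows "snd (quotient_of (of_int a / of_int d)) dvd d"
proof -
  obtain r s where rs: "quotient_of (of_int a / of_int d) = (r, s)"
    by fastforce
  have "s > 0" "coprime r s"
    using rs by (simp_all add: quotient_of_denom_pos quotient_of_coprime)
  moreover have "(of_int a / of_int d :: rat) = of_int r / of_int s"
    using rs by (rule quotient_of_div)
  ultimately have "rat_of_int (r * d) = rat_of_int (a * s)"
    using assms by (simp add: field_simps)
  then have "r * d = a * s"
    by (simp only: of_int_eq_iff)
  then have "s dvd r * d"
    by simp
  with \<open>coprime r s\<close> have "s dvd d"
    by (simp add: coprime_commute coprime_dvd_mult_right_iff)
  then show ?thesis
    using rs by simp
qed

lemma rat_cong_pow_zero_of_int_div: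
  assumes "int p ^ k dvd N" "coprime d (int p)" "d \<noteq> 0"
  shows "rat_cong_pow (of_int N / of_int d) 0 p k"
proof (cases "p ^ k = 0")
  case True
  then have "int p ^ k = 0"
    by simp
  with assms(1) have "N = 0"
    by (simp only: dvd_0_left_iff)
  then show ?thesis
    by (simp add: rat_cong_pow_def)
next
  case False
  obtain M where N: "N = int p ^ k * M"
    using assms(1) by blast
  have "(of_int N / of_int d - 0) / of_nat (p ^ k) = (of_int M / of_int d :: rat)"
    using False unfolding N by (simp add: field_simps)
  moreover have "coprime (snd (quotient_of (of_int M / of_int d))) (int p)"
    using snd_quotient_of_dvd[OF assms(3)] assms(2) by (rule coprime_divisors[OF _ dvd_refl])
  ultimately show ?thesis
    unfolding rat_cong_pow_def by simp
qed

lemma gbinomial_sum_eq_int_sum_div: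
  "(\<Sum>t = 0..n. (-1) ^ t * ((of_nat (n + t) gchoose t) - (of_nat (p + n + t) gchoose (p + t)))
          * ((-1/2 :: rat) gchoose t) ^ 2)
     = of_int (\<Sum>t=0..n. (-1)^t * (int ((t + n) choose n) - int ((t + p + n) choose n))
                         * (16^(n - t) * int (2 * t choose t)^2)) / of_int (16^n)"
  unfolding of_int_sum sum_divide_distrib
proof (rule sum.cong)
  fix t assume "t \<in> {0..n}"
  then have sixteen: "(16 :: rat)^n = 16^(n - t) * 16^t"
    by (simp flip: power_add)
  have "(t + n) choose n = (n + t) choose t"
    using binomial_add_commute[of t n] by (simp add: add.commute)
  then have A: "(of_nat (n + t) gchoose t :: rat) = of_nat ((t + n) choose n)"
    by (simp only: binomial_gbinomial)
  have "(t + p + n) choose n = (p + n + t) choose (p + t)"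
    using binomial_add_commute[of "p + t" n] by (simp add: ac_simps)
  then have B: "(of_nat (p + n + t) gchoose (p + t) :: rat) = of_nat ((t + p + n) choose n)"
    by (simp only: binomial_gbinomial)
  have C: "((-1/2 :: rat) gchoose t)^2 = of_nat (2 * t choose t)^2 / 16^t"
    by (rule gbinomial_minus_one_half_square)
  show "(-1) ^ t * ((of_nat (n + t) gchoose t) - (of_nat (p + n + t) gchoose (p + t)))
        * ((-1/2 :: rat) gchoose t) ^ 2
      = of_int ((-1)^t * (int ((t + n) choose n) - int ((t + p + n) choose n))
                  * (16^(n - t) * int (2 * t choose t)^2)) / of_int (16^n)"
    unfolding A B C by (simp add: sixteen)
qed simp

theorem lemma2p16:
  fixes p :: nat
  assumes "prime p" and "odd p"
  shows "rat_cong_pow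
     (\<Sum>t = 0..(p - 1) div 2.
        (-1) ^ t *
        ((of_nat ((p - 1) div 2 + t) gchoose t)
          - (of_nat (p + (p - 1) div 2 + t) gchoose (p + t)))
        * ((-1/2 :: rat) gchoose t) ^ 2)
     0 p 2"
proof -
  define n where "n = (p - 1) div 2"
  have p: "p = 2 * n + 1"
    using \<open>odd p\<close> unfolding n_def by (auto elim!: oddE)
  define T where "T = (\<Sum>t=0..n. (-1)^t * (int ((t + n) choose n) - int ((t + p + n) choose n))
                                * (16^(n - t) * int (2 * t choose t)^2))"
  have "int p ^ 2 dvd T"
    unfolding T_def using sum_binomial_weights_dvd_prime_square[OF \<open>prime p\<close> p] .
  moreover have "coprime (16 ^ n) (int p)"
  proof -
    have "coprime (2 ^ (4 * n)) (int p)"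
      using \<open>odd p\<close> by simp
    then show ?thesis
      by (simp add: power_mult)
  qed
  ultimately have "rat_cong_pow (of_int T / of_int (16 ^ n)) 0 p 2"
    by (rule rat_cong_pow_zero_of_int_div) simp
  then show ?thesis
    unfolding n_def[symmetric] gbinomial_sum_eq_int_sum_div T_def .
qed

end
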